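(* Let $n\in\mathbb{N}$ and $r>1$. Let $S'\subset\mathbb{R}^n$ be an $n$-simplex with $B(u,1/r)\subset S'\subset B(u,r)$ for some $u\in\mathbb{R}^n$. Let $F$ be a facet of $S'$ with supporting hyperplane $H$, and let $H^+,H^-$ be the two closed half-spaces determined by $H$, with $S'\subset H^+$ and $H^-$ disjoint from the interior of $S'$. Then there exists $v\in F$ such that $$B(v,1/r)\cap H^+\subset S'\qquad\text{and}\qquad B(v,1/r)\cap H\subset F\subset B(v,2r)\cap H.$$
   Context: $B(p,r)$ denotes the open Euclidean ball of radius $r$ centered at $p$. *)

theory Defs
  imports "HOL-Analysis.Analysis"
begin

end

theory Submission
  imports Defs
begin

text \<open>
  Let \<open>p\<close> be the vertex of the simplex opposite to \<open>F\<close>, so that the simplex is the pyramid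
  with apex \<open>p\<close> over the base \<open>F\<close>. The ray from \<open>p\<close> through \<open>u\<close> meets \<open>H\<close> in a point \<open>v\<close>,
  and the homothety with centre \<open>p\<close> mapping \<open>u\<close> to \<open>v\<close> has ratio \<open>c \<ge> 1\<close>. It maps the ball
  \<open>B(u,1/r)\<close> onto a ball around \<open>v\<close> of radius at least \<open>1/r\<close>, and it maps points of the
  pyramid to points of the infinite cone over \<open>F\<close>; the part of that cone in \<open>H\<^sup>+\<close> is the
  pyramid again, and its part in \<open>H\<close> is \<open>F\<close>. The bound \<open>F \<subseteq> B(v,2r)\<close> holds because both
  \<open>v\<close> and \<open>F\<close> lie in \<open>B(u,r)\<close>.
\<close>

lemma simplex_facet_opposite_vertex:
  fixes S F :: "'a::euclidean_space set"
  assumes "n simplex S" "F facet_of S"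
  obtains p where "p \<in> S" "p \<notin> affine hull F" "S = convex hull (insert p F)"
proof -
  obtain C where C: "\<not> affine_dependent C" "S = convex hull C"
    using assms(1) unfolding simplex_def by blast
  obtain p where p: "p \<in> C" "F = convex hull (C - {p})" "F \<noteq> {}"
    using assms(2) C facet_of_convex_hull_affine_independent by blast
  have "p \<notin> affine hull (C - {p})"
    using C(1) p(1) unfolding affine_dependent_def by blast
  then have "p \<notin> affine hull F"
    using p(2) by simp
  moreover have "S = convex hull (insert p F)"
    using C(2) p(1,2) hull_insert[of convex p "C - {p}"] by (metis insert_Diff)
  moreover have "p \<in> S"
    unfolding C(2) by (rule hull_inc[OF p(1)])
  ultimately show thesis
    using that by blast
qed

lemma pyramid_subset_halfspaces:
  fixes F :: "'a::real_inner set"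
  assumes "F \<subseteq> {x. a \<bullet> x = b}" "a \<bullet> p \<le> b"
  shows "convex hull (insert p F) \<subseteq> {x. a \<bullet> p \<le> a \<bullet> x \<and> a \<bullet> x \<le> b}"
proof (rule hull_minimal)
  show "convex {x. a \<bullet> p \<le> a \<bullet> x \<and> a \<bullet> x \<le> b}"
    using convex_Int[OF convex_halfspace_ge convex_halfspace_le]
    by (simp add: Int_def)
qed (use assms in auto)

lemma pyramid_dilation_from_apex:
  fixes F :: "'a::real_inner set"
  assumes F: "convex F" "F \<noteq> {}" "F \<subseteq> {x. a \<bullet> x = b}" and apex: "a \<bullet> p < b"
    and x: "x \<in> convex hull (insert p F)" and "1 \<le> c"
    and y: "y = p + c *\<^sub>R (x - p)" "a \<bullet> y \<le> b"
  shows "y \<in> convex hull (insert p F)" "a \<bullet> y = b \<Longrightarrow> y \<in> F"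
proof -
  have hull_eq: "convex hull (insert p F) =
      {z. \<exists>s\<ge>0. \<exists>d\<ge>0. \<exists>q. s + d = 1 \<and> q \<in> F \<and> z = s *\<^sub>R p + d *\<^sub>R q}"
    unfolding convex_hull_insert[OF F(2)] convex_hull_eq[THEN iffD2, OF F(1)] by simp
  obtain s d q where sdq: "0 \<le> s" "0 \<le> d" "s + d = 1" "q \<in> F" "x = s *\<^sub>R p + d *\<^sub>R q"
    using x unfolding hull_eq by blast
  then have "s = 1 - d"
    by simp
  then have dq: "0 \<le> d" "d \<le> 1" "q \<in> F" "x = (1 - d) *\<^sub>R p + d *\<^sub>R q"
    using sdq by auto
  define t where "t = c * d"
  have y_eq: "y = (1 - t) *\<^sub>R p + t *\<^sub>R q"
    by (simp add: y(1) dq(4) t_def algebra_simps)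
  have "a \<bullet> y = (1 - t) * (a \<bullet> p) + t * (a \<bullet> q)"
    unfolding y_eq by (simp add: inner_add_right)
  moreover have "a \<bullet> q = b"
    using dq(3) F(3) by auto
  ultimately have ay: "a \<bullet> y - b = (1 - t) * (a \<bullet> p - b)"
    by (simp add: algebra_simps)
  have "0 \<le> t"
    using dq(1) \<open>1 \<le> c\<close> by (simp add: t_def)
  moreover have "t \<le> 1"
    using ay y(2) apex by (smt (verit) mult_neg_neg)
  ultimately show "y \<in> convex hull (insert p F)"
    unfolding hull_eq using dq(3) y_eq by (intro CollectI exI[of _ "1 - t"] exI[of _ t]) auto
  show "y \<in> F" if "a \<bullet> y = b"
  proof -
    have "t = 1"
      using ay that apex by simp
    then show ?thesis
      using y_eq dq(3) by simp
  qed
qed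

lemma pyramid_ball_at_base:
  fixes F :: "'a::euclidean_space set"
  assumes F: "convex F" "F \<noteq> {}" "F \<subseteq> {x. a \<bullet> x = b}" and "a \<noteq> 0" and apex: "a \<bullet> p < b"
    and "0 < \<rho>" and ball: "ball u \<rho> \<subseteq> convex hull (insert p F)"
  obtains v where "v \<in> F" "ball v \<rho> \<inter> {x. a \<bullet> x \<le> b} \<subseteq> convex hull (insert p F)"
    "ball v \<rho> \<inter> {x. a \<bullet> x = b} \<subseteq> F"
proof -
  let ?S = "convex hull (insert p F)"
  have "u \<in> interior ?S"
    using interior_maximal[OF ball open_ball] \<open>0 < \<rho>\<close> by auto
  moreover have "interior ?S \<subseteq> interior ({x. a \<bullet> p \<le> a \<bullet> x} \<inter> {x. a \<bullet> x \<le> b})"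
    using pyramid_subset_halfspaces[OF F(3) less_imp_le[OF apex]] by (intro interior_mono) auto
  ultimately have au: "a \<bullet> p < a \<bullet> u" "a \<bullet> u < b"
    using \<open>a \<noteq> 0\<close> by (auto simp: interior_Int)
  define c where "c = (b - a \<bullet> p) / (a \<bullet> u - a \<bullet> p)"
  define v where "v = p + c *\<^sub>R (u - p)"
  have "1 \<le> c"
    using au by (simp add: c_def field_simps)
  have "a \<bullet> v = a \<bullet> p + c * (a \<bullet> u - a \<bullet> p)"
    by (simp add: v_def inner_add_right inner_diff_right)
  then have av: "a \<bullet> v = b"
    using au by (simp add: c_def)
  have in_pyramid: "y \<in> ?S" "a \<bullet> y = b \<Longrightarrow> y \<in> F"
    if "dist v y < \<rho>" "a \<bullet> y \<le> b" for y
  proof -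
    define x where "x = u + (1 / c) *\<^sub>R (y - v)"
    have "dist u x = dist v y / c"
      using \<open>1 \<le> c\<close> by (simp add: x_def dist_norm norm_minus_commute)
    also have "\<dots> \<le> dist v y"
      using \<open>1 \<le> c\<close> by (simp add: divide_le_eq mult_le_cancel_left1)
    also have "\<dots> < \<rho>"
      using that(1) .
    finally have "x \<in> ?S"
      using ball by auto
    moreover have "y = p + c *\<^sub>R (x - p)"
      using \<open>1 \<le> c\<close> by (simp add: x_def v_def algebra_simps)
    ultimately show "y \<in> ?S" "a \<bullet> y = b \<Longrightarrow> y \<in> F"
      using pyramid_dilation_from_apex[OF F apex _ \<open>1 \<le> c\<close> _ that(2)] by blast+
  qed
  have "v \<in> F"
    using in_pyramid(2)[of v] av \<open>0 < \<rho>\<close> by simp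
  moreover have "ball v \<rho> \<inter> {x. a \<bullet> x \<le> b} \<subseteq> ?S" "ball v \<rho> \<inter> {x. a \<bullet> x = b} \<subseteq> F"
    using in_pyramid by auto
  ultimately show thesis
    using that by blast
qed

theorem mainTheorem11:
  fixes S' F :: "'a::euclidean_space set" and u a :: 'a and r b :: real
  assumes r: "r > 1"
    and simp: "int DIM('a) simplex S'"
    and balls: "ball u (1/r) \<subseteq> S'" "S' \<subseteq> ball u r"
    and facet: "F facet_of S'"
    and hyp: "a \<noteq> 0" "affine hull F = {x. a \<bullet> x = b}"
    and Hplus: "S' \<subseteq> {x. a \<bullet> x \<le> b}"
    and Hminus: "{x. a \<bullet> x \<ge> b} \<inter> interior S' = {}"
  shows "\<exists>v\<in>F. ball v (1/r) \<inter> {x. a \<bullet> x \<le> b} \<subseteq> S'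
            \<and> ball v (1/r) \<inter> {x. a \<bullet> x = b} \<subseteq> F
            \<and> F \<subseteq> ball v (2*r) \<inter> {x. a \<bullet> x = b}"
proof -
  obtain p where p: "p \<in> S'" "p \<notin> affine hull F" and S'_eq: "S' = convex hull (insert p F)"
    using simplex_facet_opposite_vertex[OF simp facet] by blast
  have F: "convex F" "F \<noteq> {}" "F \<subseteq> {x. a \<bullet> x = b}"
    using facet hull_subset[of F affine] hyp(2) by (auto simp: facet_of_def face_of_imp_convex)
  have "a \<bullet> p < b"
    using p Hplus hyp(2) by fastforce
  then obtain v where v: "v \<in> F" "ball v (1/r) \<inter> {x. a \<bullet> x \<le> b} \<subseteq> S'"
      "ball v (1/r) \<inter> {x. a \<bullet> x = b} \<subseteq> F"
    using pyramid_ball_at_base[OF F hyp(1) _ _ balls(1)[unfolded S'_eq]] r S'_eq by auto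
  have "F \<subseteq> ball u r"
    using facet_of_imp_subset[OF facet] balls(2) by blast
  have "dist v x < 2*r" if "x \<in> F" for x
  proof -
    have "dist u x < r" "dist u v < r"
      using that v(1) \<open>F \<subseteq> ball u r\<close> by auto
    then show ?thesis
      using dist_triangle[of v x u] by (simp add: dist_commute)
  qed
  then have "F \<subseteq> ball v (2*r)"
    by auto
  then show ?thesis
    using v F(3) by blast
qed

end
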